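(* Let $X$ be a real $n\times p$ matrix ($p<n$) of full column rank and $\sigma>0$. The regression breakdown point of the $\ell_1\square\ell_2$ estimator is at least $m(X)$; that is, for every $f\in\mathbb{R}^p$, $z\in\mathbb{R}^n$ and every $M\subset\{1,\dots,n\}$ with $|M|\leq m(X)$, the set of all first components $\hat g$ of minimizers of $(g,b)\mapsto\sigma\|y-Xg-b\|_1+\frac12\|b\|_2^2$ with $y=Xf+z+e$, where $e$ ranges over all vectors in $\mathbb{R}^n$ with $\operatorname{supp}(e)\subset M$, is bounded.
   Context: For data $y\in\mathbb{R}^n$, the $\ell_1\square\ell_2$ estimator is the first component $\hat g$ of a solution $(\hat g,\hat b)$ of $\min_{(g,b)\in\mathbb{R}^p\times\mathbb{R}^n}\sigma\|y-Xg-b\|_1+\frac12\|b\|_2^2$. The regression breakdown point of an estimator is the maximum number of components of the data $y$ that may diverge while keeping the estimator bounded. With $N=\{1,\dots,n\}$ and $x_i^\top$ the rows of $X$, $c_k(X)=\min_{S\subset N,|S|=k}\min_{g\neq0}\frac{\sum_{i\in N\setminus S}|x_i^\top g|}{\sum_{i\in N}|x_i^\top g|}$ for $k\in N$, and $m(X)=\max\{k\in N: c_k(X)>1/2\}$. *)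

theory Defs
  imports "HOL-Analysis.Analysis"
begin

definition l1l2_obj :: "real \<Rightarrow> real^'p^'n \<Rightarrow> real^'n \<Rightarrow> real^'p \<Rightarrow> real^'n \<Rightarrow> real" where
  "l1l2_obj \<sigma> X y g b =
     \<sigma> * (\<Sum>i\<in>UNIV. \<bar>(y - X *v g - b) $ i\<bar>) + (1/2) * (norm b)\<^sup>2"

definition l1l2_minimizer :: "real \<Rightarrow> real^'p^'n \<Rightarrow> real^'n \<Rightarrow> real^'p \<Rightarrow> real^'n \<Rightarrow> bool" where
  "l1l2_minimizer \<sigma> X y g b \<longleftrightarrow> (\<forall>g' b'. l1l2_obj \<sigma> X y g b \<le> l1l2_obj \<sigma> X y g' b')"

text \<open>c_k(X): minimum over |S| = k and g \<noteq> 0 of the ratio (rendered as Inf;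
  the set is nonempty and bounded for 1 \<le> k \<le> n).\<close>
definition c_k :: "nat \<Rightarrow> real^'p^'n \<Rightarrow> real" where
  "c_k k X = Inf {(\<Sum>i\<in>UNIV - S. \<bar>(X *v g) $ i\<bar>) / (\<Sum>i\<in>UNIV. \<bar>(X *v g) $ i\<bar>)
                  | S g. card S = k \<and> g \<noteq> 0}"

definition m_X :: "real^'p^'n \<Rightarrow> nat" where
  "m_X X = Max ({0} \<union> {k \<in> {1..CARD('n)}. c_k k X > 1/2})"

end

theory Submission
  imports Defs
begin

text \<open>Comparing a minimizer with the competitor \<open>(f, 0)\<close> shows that the fitted residual is
  not much larger in \<open>\<ell>\<^sub>1\<close> than \<open>z + e\<close>, because the Huber-type lower bound
  \<open>\<sigma>\<bar>r\<bar> - \<sigma>\<^sup>2/2 \<le> \<sigma>\<bar>r - b\<bar> + b\<^sup>2/2\<close> removes \<open>b\<close> at a fixed cost. Writing \<open>u = g - f\<close>, the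
  coordinates of \<open>X u\<close> outside \<open>M\<close> increase the residual, those in \<open>M\<close> can decrease it; since
  \<open>card M \<le> m(X)\<close>, the definition of \<open>c\<^sub>k\<close> puts a fraction \<open>c > 1/2\<close> of the \<open>\<ell>\<^sub>1\<close> mass of \<open>X u\<close>
  outside \<open>M\<close>. Hence \<open>(2c - 1)\<parallel>X u\<parallel>\<^sub>1\<close> is bounded independently of \<open>e\<close>, and full column rank
  turns this into a bound on \<open>g\<close>.\<close>

definition norm1 :: "real^'n \<Rightarrow> real" where
  "norm1 v = (\<Sum>i\<in>UNIV. \<bar>v $ i\<bar>)"

lemma norm1_nonneg: "0 \<le> norm1 v"
  by (simp add: norm1_def sum_nonneg)

lemma norm1_split: "norm1 v = (\<Sum>i\<in>UNIV - M. \<bar>v $ i\<bar>) + (\<Sum>i\<in>M. \<bar>v $ i\<bar>)"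
  unfolding norm1_def by (metis add.commute finite subset_UNIV sum.subset_diff)

lemma huber_lower_bound:
  fixes \<sigma> r b :: real
  assumes "\<sigma> \<ge> 0"
  shows "\<sigma> * \<bar>r\<bar> - \<sigma>\<^sup>2 / 2 \<le> \<sigma> * \<bar>r - b\<bar> + b\<^sup>2 / 2"
proof -
  have "\<sigma> * \<bar>r\<bar> \<le> \<sigma> * \<bar>r - b\<bar> + \<sigma> * \<bar>b\<bar>"
    using assms abs_triangle_ineq[of "r - b" b] by (simp add: mult_left_mono flip: distrib_left)
  moreover have "\<sigma> * \<bar>b\<bar> \<le> \<sigma>\<^sup>2 / 2 + b\<^sup>2 / 2"
  proof -
    have "0 \<le> (\<sigma> - \<bar>b\<bar>)\<^sup>2" by simp
    then show ?thesis by (simp add: power2_diff)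
  qed
  ultimately show ?thesis by linarith
qed

lemma l1l2_obj_lower_bound:
  fixes X :: "real^'p^'n"
  assumes "\<sigma> \<ge> 0"
  shows "\<sigma> * norm1 (y - X *v g) - real CARD('n) * \<sigma>\<^sup>2 / 2 \<le> l1l2_obj \<sigma> X y g b"
proof -
  have norm_b: "(norm b)\<^sup>2 = (\<Sum>i\<in>UNIV. (b $ i)\<^sup>2)"
    by (simp add: norm_vec_def L2_set_def sum_nonneg)
  have "(\<Sum>i\<in>UNIV. \<sigma> * \<bar>(y - X *v g) $ i\<bar> - \<sigma>\<^sup>2 / 2)
      \<le> (\<Sum>i\<in>UNIV. \<sigma> * \<bar>(y - X *v g - b) $ i\<bar> + (b $ i)\<^sup>2 / 2)"
    by (rule sum_mono) (use huber_lower_bound[OF assms] in simp)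
  then show ?thesis
    by (simp add: l1l2_obj_def norm1_def norm_b sum_subtractf sum.distrib sum_distrib_left
        flip: sum_divide_distrib)
qed

lemma l1l2_minimizer_residual_bound:
  fixes X :: "real^'p^'n"
  assumes "\<sigma> > 0" and "l1l2_minimizer \<sigma> X (X *v f + w) g b"
  shows "norm1 (w - X *v (g - f)) - norm1 w \<le> real CARD('n) * \<sigma> / 2"
proof -
  let ?y = "X *v f + w"
  have residual: "?y - X *v g = w - X *v (g - f)"
    by (simp add: matrix_vector_mult_diff_distrib)
  have "l1l2_obj \<sigma> X ?y g b \<le> l1l2_obj \<sigma> X ?y f 0"
    using assms(2) unfolding l1l2_minimizer_def by blast
  also have "\<dots> = \<sigma> * norm1 w"
    by (simp add: l1l2_obj_def norm1_def)
  finally have "\<sigma> * (norm1 (w - X *v (g - f)) - norm1 w) \<le> \<sigma> * (real CARD('n) * \<sigma> / 2)"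
    using l1l2_obj_lower_bound[of \<sigma> ?y X g b] assms(1)
    by (simp add: residual algebra_simps power2_eq_square)
  then show ?thesis
    using assms(1) by simp
qed

lemma norm1_shift_lower_bound:
  fixes z e w :: "real^'n"
  assumes "\<forall>i. i \<notin> M \<longrightarrow> e $ i = 0"
  shows "(\<Sum>i\<in>UNIV - M. \<bar>w $ i\<bar>) - (\<Sum>i\<in>M. \<bar>w $ i\<bar>) - 2 * norm1 z
     \<le> norm1 (z + e - w) - norm1 (z + e)"
proof -
  have "(\<Sum>i\<in>UNIV. (if i \<in> M then - \<bar>w $ i\<bar> else \<bar>w $ i\<bar>) - 2 * \<bar>z $ i\<bar>)
     \<le> (\<Sum>i\<in>UNIV. \<bar>(z + e - w) $ i\<bar> - \<bar>(z + e) $ i\<bar>)"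
    by (rule sum_mono) (use assms in auto)
  moreover have "(\<Sum>i\<in>UNIV. (if i \<in> M then - \<bar>w $ i\<bar> else \<bar>w $ i\<bar>))
      = (\<Sum>i\<in>UNIV - M. \<bar>w $ i\<bar>) - (\<Sum>i\<in>M. \<bar>w $ i\<bar>)"
    by (simp add: sum.If_cases sum_negf Compl_eq_Diff_UNIV Int_commute)
  ultimately show ?thesis
    by (simp add: norm1_def sum_subtractf sum_distrib_left)
qed

lemma c_k_mul_norm1_le:
  fixes X :: "real^'p^'n"
  assumes "card S = k"
  shows "c_k k X * norm1 (X *v u) \<le> (\<Sum>i\<in>UNIV - S. \<bar>(X *v u) $ i\<bar>)"
proof (cases "norm1 (X *v u) = 0")
  case True
  then show ?thesis by (simp add: sum_nonneg)
next
  case False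
  then have pos: "norm1 (X *v u) > 0" and "u \<noteq> 0"
    using norm1_nonneg[of "X *v u"] by (auto simp: order_less_le norm1_def)
  let ?R = "{(\<Sum>i\<in>UNIV - S. \<bar>(X *v g) $ i\<bar>) / (\<Sum>i\<in>UNIV. \<bar>(X *v g) $ i\<bar>)
               | S g. card S = k \<and> g \<noteq> 0}"
  have "(\<Sum>i\<in>UNIV - S. \<bar>(X *v u) $ i\<bar>) / norm1 (X *v u) \<in> ?R"
    using assms \<open>u \<noteq> 0\<close> unfolding norm1_def by blast
  moreover have "bdd_below ?R"
    by (rule bdd_belowI[of _ 0]) (auto intro!: divide_nonneg_nonneg sum_nonneg)
  ultimately have "c_k k X \<le> (\<Sum>i\<in>UNIV - S. \<bar>(X *v u) $ i\<bar>) / norm1 (X *v u)"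
    unfolding c_k_def by (rule cInf_lower)
  then show ?thesis
    using pos by (simp add: le_divide_eq)
qed

lemma m_X_mass_outside:
  fixes X :: "real^'p^'n"
  assumes "card M \<le> m_X X"
  obtains c where "c > 1/2" and "\<And>u. c * norm1 (X *v u) \<le> (\<Sum>i\<in>UNIV - M. \<bar>(X *v u) $ i\<bar>)"
proof (cases "m_X X = 0")
  case True
  then have "M = {}"
    using assms by simp
  show ?thesis
    by (rule that[of 1]) (auto simp: norm1_def \<open>M = {}\<close>)
next
  case False
  have "m_X X \<in> {0} \<union> {k \<in> {1..CARD('n)}. c_k k X > 1/2}"
    unfolding m_X_def by (rule Max_in) auto
  with False have m_le: "m_X X \<le> CARD('n)" and c_gt: "c_k (m_X X) X > 1/2"
    by auto
  obtain S where S: "M \<subseteq> S" "card S = m_X X"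
    using exists_subset_between[of M "m_X X" UNIV] assms m_le by auto
  show ?thesis
  proof (rule that[OF c_gt])
    fix u
    have "c_k (m_X X) X * norm1 (X *v u) \<le> (\<Sum>i\<in>UNIV - S. \<bar>(X *v u) $ i\<bar>)"
      by (rule c_k_mul_norm1_le[OF S(2)])
    also have "\<dots> \<le> (\<Sum>i\<in>UNIV - M. \<bar>(X *v u) $ i\<bar>)"
      by (rule sum_mono2) (use S(1) in auto)
    finally show "c_k (m_X X) X * norm1 (X *v u) \<le> (\<Sum>i\<in>UNIV - M. \<bar>(X *v u) $ i\<bar>)" .
  qed
qed

lemma l1l2_minimizer_fit_bound:
  fixes X :: "real^'p^'n"
  assumes "\<sigma> > 0"
    and mass: "\<And>u. c * norm1 (X *v u) \<le> (\<Sum>i\<in>UNIV - M. \<bar>(X *v u) $ i\<bar>)"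
    and "\<forall>i. i \<notin> M \<longrightarrow> e $ i = 0"
    and "l1l2_minimizer \<sigma> X (X *v f + z + e) g b"
  shows "(2 * c - 1) * norm1 (X *v (g - f)) \<le> real CARD('n) * \<sigma> / 2 + 2 * norm1 z"
proof -
  let ?v = "X *v (g - f)"
  have "norm1 (z + e - ?v) - norm1 (z + e) \<le> real CARD('n) * \<sigma> / 2"
    using l1l2_minimizer_residual_bound[of \<sigma> X f "z + e" g b] assms(1,4)
    by (simp add: add.assoc)
  then show ?thesis
    using mass[of "g - f"] norm1_shift_lower_bound[OF assms(3), of ?v z] norm1_split[of ?v M]
    by (simp add: algebra_simps)
qed

lemma full_rank_norm1_bounded_below:
  fixes X :: "real^'p^'n"
  assumes "rank X = CARD('p)"
  obtains B where "B > 0" and "\<And>x. B * norm x \<le> norm1 (X *v x)"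
proof -
  obtain B where "B > 0" and B: "\<And>x. B * norm x \<le> norm (X *v x)"
    using linear_inj_bounded_below_pos[of "(*v) X"] assms full_rank_injective by blast
  moreover have "B * norm x \<le> norm1 (X *v x)" for x
    using B[of x] norm_le_l1_cart[of "X *v x"] unfolding norm1_def by linarith
  ultimately show ?thesis
    using that by blast
qed

theorem corollary4p6:
  fixes X :: "real^'p^'n" and \<sigma> :: real and f :: "real^'p" and z :: "real^'n"
    and M :: "'n set"
  assumes "CARD('p) < CARD('n)"
    and "rank X = CARD('p)"
    and "\<sigma> > 0"
    and "card M \<le> m_X X"
  shows "bounded {g. \<exists>e b. (\<forall>i. i \<notin> M \<longrightarrow> e $ i = 0) \<and>
                         l1l2_minimizer \<sigma> X (X *v f + z + e) g b}"
proof -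
  obtain c where c: "c > 1/2"
    and mass: "\<And>u. c * norm1 (X *v u) \<le> (\<Sum>i\<in>UNIV - M. \<bar>(X *v u) $ i\<bar>)"
    using m_X_mass_outside[OF assms(4)] by blast
  obtain B where B: "B > 0" "\<And>x. B * norm x \<le> norm1 (X *v x)"
    using full_rank_norm1_bounded_below[OF assms(2)] by blast
  define K where "K = (real CARD('n) * \<sigma> / 2 + 2 * norm1 z) / (2 * c - 1)"
  have "norm g \<le> norm f + K / B"
    if "\<forall>i. i \<notin> M \<longrightarrow> e $ i = 0" "l1l2_minimizer \<sigma> X (X *v f + z + e) g b" for g e b
  proof -
    have "norm1 (X *v (g - f)) \<le> K"
      using l1l2_minimizer_fit_bound[OF assms(3) mass that] c
      by (simp add: K_def le_divide_eq mult.commute)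
    then have "norm (g - f) \<le> K / B"
      using B(1) B(2)[of "g - f"] by (simp add: le_divide_eq mult.commute)
    then show ?thesis
      using norm_triangle_sub[of g f] by linarith
  qed
  then show ?thesis
    unfolding bounded_iff by blast
qed

end
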